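(* Let $A\subseteq\Gamma$ be a finite set, $D=A-A$, $S=A+A$. Then for every integer $k\ge1$, $$\mathsf{E}^D_k(D)\ge|A^{k+1}-\Delta(A)|\ge|A-A|\,|A|^k,$$ $$\sum_xS(x)(S*D)^k(x)\ge|A^{k+1}+\Delta(A)|\ge|A|^k\max\{|A-A|,|A+A|\},$$ $$\mathsf{E}^D_k(S)\ge|A|^{k-1}|A^2+\Delta(A)|\ge|A|^k\max\{|A-A|,|A+A|\}.$$
   Context: $\Gamma$ is an abelian group; sets are identified with indicator functions. $(f*g)(x)=\sum_yf(y)g(x-y)$, $(f\circ g)(x)=\sum_yf(y)g(y+x)$. For a set $X$, $X_s=X\cap(X-s)$, and for $P\subseteq\Gamma$, $\mathsf{E}^P_k(X)=\sum_{s\in P}|X_s|^k=\sum_{s\in P}(X\circ X)(s)^k$. $A^{n}\pm\Delta(A)=\{(a_1\pm a,\dots,a_n\pm a): a_1,\dots,a_n,a\in A\}\subseteq\Gamma^n$. *)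

theory Defs
  imports Main
begin

text \<open>Sets are identified with their (natural-number valued) indicator functions.\<close>
definition ind :: "'a set \<Rightarrow> 'a \<Rightarrow> nat" where
  "ind X x = (if x \<in> X then 1 else 0)"

definition conv :: "('a::ab_group_add \<Rightarrow> nat) \<Rightarrow> ('a \<Rightarrow> nat) \<Rightarrow> 'a \<Rightarrow> nat" where
  "conv f g x = (\<Sum>y\<in>{y. f y \<noteq> 0}. f y * g (x - y))"

definition sumset :: "'a::ab_group_add set \<Rightarrow> 'a set \<Rightarrow> 'a set" where
  "sumset A B = {a + b | a b. a \<in> A \<and> b \<in> B}"

definition diffset :: "'a::ab_group_add set \<Rightarrow> 'a set \<Rightarrow> 'a set" where
  "diffset A B = {a - b | a b. a \<in> A \<and> b \<in> B}"

definition Xsec :: "'a::ab_group_add set \<Rightarrow> 'a \<Rightarrow> 'a set" where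
  "Xsec X s = X \<inter> ((\<lambda>x. x - s) ` X)"

definition Ek :: "'a::ab_group_add set \<Rightarrow> nat \<Rightarrow> 'a set \<Rightarrow> nat" where
  "Ek P k X = (\<Sum>s\<in>P. card (Xsec X s) ^ k)"

definition tuples_plus_diag :: "'a::ab_group_add set \<Rightarrow> nat \<Rightarrow> 'a list set" where
  "tuples_plus_diag A n =
     {map (\<lambda>x. x + a) xs | xs a. length xs = n \<and> set xs \<subseteq> A \<and> a \<in> A}"

definition tuples_minus_diag :: "'a::ab_group_add set \<Rightarrow> nat \<Rightarrow> 'a list set" where
  "tuples_minus_diag A n =
     {map (\<lambda>x. x - a) xs | xs a. length xs = n \<and> set xs \<subseteq> A \<and> a \<in> A}"

end

theory Submission
  imports Defs
begin

text \<open>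
  Every inequality is a count of tuples. Removing the first entry x of a tuple in
  A^(k+1) \<plusminus> \<Delta>(A) leaves k entries from a set depending only on x: a translate of D_x
  for the difference tuples and {y \<in> S. x - y \<in> D} for the sum tuples, which gives
  the upper bounds. Conversely, every element of D (of S) is the first entry of at least
  |A|^k difference (sum) tuples, and every element of D is the difference of the first
  two entries of at least |A|^k sum tuples, which gives the lower bounds. Finally
  (x, x + s) \<mapsto> (s, x) embeds A^2 + \<Delta>(A) into the pairs (s, x) with s \<in> D and
  x \<in> S_s, and |S_s| \<ge> |A| for s \<in> D.
\<close>

definition shifted_tuples :: "'a::ab_group_add set \<Rightarrow> 'a set \<Rightarrow> nat \<Rightarrow> 'a list set" where
  "shifted_tuples A C n = {map (\<lambda>x. x + c) xs | xs c. length xs = n \<and> set xs \<subseteq> A \<and> c \<in> C}"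

lemma tuples_plus_diag_eq_shifted_tuples: "tuples_plus_diag A n = shifted_tuples A A n"
  unfolding tuples_plus_diag_def shifted_tuples_def ..

lemma tuples_minus_diag_eq_shifted_tuples:
  "tuples_minus_diag A n = shifted_tuples A (uminus ` A) n"
  unfolding tuples_minus_diag_def shifted_tuples_def by force

lemma diffset_eq_sumset_uminus: "diffset A B = sumset A (uminus ` B)"
  unfolding diffset_def sumset_def by force

lemma finite_sumset:
  assumes "finite A" and "finite B"
  shows "finite (sumset A B)"
proof -
  have "sumset A B = (\<lambda>(a, b). a + b) ` (A \<times> B)"
    unfolding sumset_def by auto
  then show ?thesis
    using assms by simp
qed

lemma finite_diffset: "finite A \<Longrightarrow> finite B \<Longrightarrow> finite (diffset A B)"
  by (simp add: diffset_eq_sumset_uminus finite_sumset)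

lemma finite_shifted_tuples:
  assumes "finite A" and "finite C"
  shows "finite (shifted_tuples A C n)"
proof -
  have "shifted_tuples A C n =
      (\<lambda>(xs, c). map (\<lambda>x. x + c) xs) ` ({xs. set xs \<subseteq> A \<and> length xs = n} \<times> C)"
    unfolding shifted_tuples_def by auto
  then show ?thesis
    using assms by (simp add: finite_lists_length_eq)
qed

lemma card_mult_le_card_if_fibres_ge:
  assumes "finite T" and "\<And>x. x \<in> X \<Longrightarrow> m \<le> card {t \<in> T. f t = x}"
  shows "card X * m \<le> card T"
proof (cases "finite X")
  case True
  have "card X * m \<le> (\<Sum>x\<in>X. card {t \<in> T. f t = x})"
    using assms(2) sum_mono[of X "\<lambda>_. m"] by (simp add: mult.commute)
  also have "\<dots> = card (\<Union>x\<in>X. {t \<in> T. f t = x})"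
    using True assms(1) by (subst card_UN_disjoint) auto
  also have "\<dots> \<le> card T"
    using assms(1) by (intro card_mono) auto
  finally show ?thesis .
qed simp

lemma card_sumset_mult_le_card_shifted_tuples:
  assumes "finite A" and "finite C"
  shows "card (sumset A C) * card A ^ k \<le> card (shifted_tuples A C (k + 1))"
proof (rule card_mult_le_card_if_fibres_ge[where f = hd])
  show "finite (shifted_tuples A C (k + 1))"
    using assms by (rule finite_shifted_tuples)
  fix x assume "x \<in> sumset A C"
  then obtain b c where b: "b \<in> A" and c: "c \<in> C" and x: "x = b + c"
    unfolding sumset_def by blast
  let ?L = "{xs. set xs \<subseteq> A \<and> length xs = k}"
  let ?g = "\<lambda>xs. map (\<lambda>y. y + c) (b # xs)"
  have "inj_on ?g ?L"
    by (rule inj_onI) simp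
  then have "card A ^ k = card (?g ` ?L)"
    using assms(1) by (simp add: card_image card_lists_length_eq)
  also have "\<dots> \<le> card {t \<in> shifted_tuples A C (k + 1). hd t = x}"
  proof (rule card_mono)
    show "finite {t \<in> shifted_tuples A C (k + 1). hd t = x}"
      using finite_shifted_tuples[OF assms] by simp
    show "?g ` ?L \<subseteq> {t \<in> shifted_tuples A C (k + 1). hd t = x}"
      using b c unfolding x shifted_tuples_def by fastforce
  qed
  finally show "card A ^ k \<le> card {t \<in> shifted_tuples A C (k + 1). hd t = x}" .
qed

lemma card_diffset_mult_le_card_shifted_tuples:
  assumes "finite A" and "finite C"
  shows "card (diffset A A) * (card C * card A ^ k) \<le> card (shifted_tuples A C (k + 2))"
proof (rule card_mult_le_card_if_fibres_ge[where f = "\<lambda>t. hd t - hd (tl t)"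
      and X = "diffset A A" and m = "card C * card A ^ k"])
  show "finite (shifted_tuples A C (k + 2))"
    using assms by (rule finite_shifted_tuples)
  fix d assume "d \<in> diffset A A"
  then obtain p q where p: "p \<in> A" and q: "q \<in> A" and d: "d = p - q"
    unfolding diffset_def by blast
  let ?L = "C \<times> {xs. set xs \<subseteq> A \<and> length xs = k}"
  let ?g = "\<lambda>(c, xs). map (\<lambda>y. y + c) (p # q # xs)"
  have "inj_on ?g ?L"
  proof (rule inj_onI)
    fix u v assume "?g u = ?g v"
    moreover obtain c xs c' xs' where "u = (c, xs)" "v = (c', xs')"
      by fastforce
    ultimately show "u = v"
      by auto
  qed
  then have "card C * card A ^ k = card (?g ` ?L)"
    using assms by (simp add: card_image card_lists_length_eq card_cartesian_product)
  also have "\<dots> \<le> card {t \<in> shifted_tuples A C (k + 2). hd t - hd (tl t) = d}"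
  proof (rule card_mono)
    show "finite {t \<in> shifted_tuples A C (k + 2). hd t - hd (tl t) = d}"
      using finite_shifted_tuples[OF assms] by simp
    show "?g ` ?L \<subseteq> {t \<in> shifted_tuples A C (k + 2). hd t - hd (tl t) = d}"
    proof
      fix t assume "t \<in> ?g ` ?L"
      then obtain c xs where t: "t = ?g (c, xs)" and "c \<in> C" "set xs \<subseteq> A" "length xs = k"
        by blast
      then show "t \<in> {t \<in> shifted_tuples A C (k + 2). hd t - hd (tl t) = d}"
        using p q unfolding d shifted_tuples_def
        by (intro CollectI conjI exI[of _ "p # q # xs"] exI[of _ c]) auto
    qed
  qed
  finally show "card C * card A ^ k \<le> card {t \<in> shifted_tuples A C (k + 2). hd t - hd (tl t) = d}" .
qed

lemma card_le_sum_card_pow_if_Cons: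
  assumes "finite X" and "\<And>x. x \<in> X \<Longrightarrow> finite (F x)"
    and "\<And>t. t \<in> T \<Longrightarrow> \<exists>x xs. t = x # xs \<and> x \<in> X \<and> set xs \<subseteq> F x \<and> length xs = k"
  shows "card T \<le> (\<Sum>x\<in>X. card (F x) ^ k)"
proof -
  let ?\<Sigma> = "Sigma X (\<lambda>x. {xs. set xs \<subseteq> F x \<and> length xs = k})"
  have fin: "finite ?\<Sigma>"
    using assms(1,2) by (simp add: finite_lists_length_eq)
  have "T \<subseteq> (\<lambda>(x, xs). x # xs) ` ?\<Sigma>"
    using assms(3) by fastforce
  then have "card T \<le> card ((\<lambda>(x, xs). x # xs) ` ?\<Sigma>)"
    using fin by (intro card_mono) simp_all
  also have "\<dots> \<le> card ?\<Sigma>"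
    by (rule card_image_le[OF fin])
  also have "\<dots> = (\<Sum>x\<in>X. card (F x) ^ k)"
    using assms(1,2) by (simp add: finite_lists_length_eq card_lists_length_eq)
  finally show ?thesis .
qed

lemma card_Xsec_eq: "card (Xsec X s) = card {y \<in> X. y - s \<in> X}"
proof -
  have "Xsec X s = (\<lambda>y. y - s) ` {y \<in> X. y - s \<in> X}"
    unfolding Xsec_def by force
  moreover have "inj_on (\<lambda>y. y - s) {y \<in> X. y - s \<in> X}"
    by (rule inj_onI) simp
  ultimately show ?thesis
    by (simp add: card_image)
qed

lemma card_tuples_minus_diag_le_Ek:
  assumes "finite A"
  defines "D \<equiv> diffset A A"
  shows "card (tuples_minus_diag A (k + 1)) \<le> Ek D k D"
proof -
  have "card (tuples_minus_diag A (k + 1)) \<le> (\<Sum>s\<in>D. card {y \<in> D. y - s \<in> D} ^ k)"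
  proof (rule card_le_sum_card_pow_if_Cons)
    show "finite D"
      unfolding D_def using assms(1) by (intro finite_diffset)
    then show "finite {y \<in> D. y - s \<in> D}" for s
      by simp
    fix t assume "t \<in> tuples_minus_diag A (k + 1)"
    then obtain b xs a where t: "t = map (\<lambda>x. x - a) (b # xs)" and "length xs = k"
      and "b \<in> A" "set xs \<subseteq> A" "a \<in> A"
      unfolding tuples_minus_diag_def by (auto simp: length_Suc_conv)
    moreover have "c - a - (b - a) = c - b" for c
      by (simp add: algebra_simps)
    ultimately show "\<exists>s ys. t = s # ys \<and> s \<in> D \<and> set ys \<subseteq> {y \<in> D. y - s \<in> D} \<and> length ys = k"
      unfolding D_def diffset_def by fastforce
  qed
  then show ?thesis
    unfolding Ek_def by (simp add: card_Xsec_eq)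
qed

lemma conv_ind_eq_card:
  assumes "finite S"
  shows "conv (ind S) (ind D) x = card {y \<in> S. x - y \<in> D}"
proof -
  have "{y. ind S y \<noteq> 0} = S"
    unfolding ind_def by auto
  then have "conv (ind S) (ind D) x = (\<Sum>y\<in>S. ind D (x - y))"
    unfolding conv_def by (intro sum.cong) (auto simp: ind_def)
  also have "\<dots> = card {y \<in> S. x - y \<in> D}"
    using assms by (simp add: ind_def sum.If_cases Int_def)
  finally show ?thesis .
qed

lemma card_tuples_plus_diag_le_sum_conv:
  assumes "finite A"
  defines "D \<equiv> diffset A A" and "S \<equiv> sumset A A"
  shows "card (tuples_plus_diag A (k + 1)) \<le> (\<Sum>x\<in>S. ind S x * conv (ind S) (ind D) x ^ k)"
proof -
  have finS: "finite S"
    unfolding S_def using assms(1) by (intro finite_sumset)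
  have "card (tuples_plus_diag A (k + 1)) \<le> (\<Sum>x\<in>S. card {y \<in> S. x - y \<in> D} ^ k)"
  proof (rule card_le_sum_card_pow_if_Cons)
    show "finite S" "finite {y \<in> S. x - y \<in> D}" for x
      using finS by simp_all
    fix t assume "t \<in> tuples_plus_diag A (k + 1)"
    then obtain b xs a where t: "t = map (\<lambda>x. x + a) (b # xs)" and "length xs = k"
      and "b \<in> A" "set xs \<subseteq> A" "a \<in> A"
      unfolding tuples_plus_diag_def by (auto simp: length_Suc_conv)
    moreover have "b + a - (c + a) = b - c" for c
      by (simp add: algebra_simps)
    ultimately show "\<exists>x ys. t = x # ys \<and> x \<in> S \<and> set ys \<subseteq> {y \<in> S. x - y \<in> D} \<and> length ys = k"
      unfolding D_def S_def diffset_def sumset_def by fastforce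
  qed
  also have "\<dots> = (\<Sum>x\<in>S. ind S x * conv (ind S) (ind D) x ^ k)"
    using finS by (intro sum.cong) (simp_all add: ind_def conv_ind_eq_card)
  finally show ?thesis .
qed

lemma card_tuples_plus_diag_2_le_sum_card_Xsec:
  assumes "finite A"
  shows "card (tuples_plus_diag A 2) \<le> (\<Sum>s\<in>diffset A A. card (Xsec (sumset A A) s))"
proof -
  let ?\<Sigma> = "Sigma (diffset A A) (Xsec (sumset A A))"
  have fin: "finite ?\<Sigma>"
    using assms by (simp add: finite_diffset finite_sumset Xsec_def)
  have "tuples_plus_diag A 2 \<subseteq> (\<lambda>(s, x). [x, x + s]) ` ?\<Sigma>"
  proof
    fix t assume "t \<in> tuples_plus_diag A 2"
    then obtain b c a where t: "t = [b + a, c + a]" and "b \<in> A" "c \<in> A" "a \<in> A"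
      unfolding tuples_plus_diag_def by (auto simp: numeral_2_eq_2 length_Suc_conv)
    moreover have "b + a = (c + a) - (c - b)"
      by (simp add: algebra_simps)
    ultimately have "c - b \<in> diffset A A" and "b + a \<in> Xsec (sumset A A) (c - b)"
      unfolding Xsec_def diffset_def sumset_def by blast+
    moreover have "t = [b + a, (b + a) + (c - b)]"
      unfolding t by (simp add: algebra_simps)
    ultimately show "t \<in> (\<lambda>(s, x). [x, x + s]) ` ?\<Sigma>"
      by force
  qed
  then have "card (tuples_plus_diag A 2) \<le> card ((\<lambda>(s, x). [x, x + s]) ` ?\<Sigma>)"
    using fin by (intro card_mono) simp_all
  also have "\<dots> \<le> card ?\<Sigma>"
    by (rule card_image_le[OF fin])
  also have "\<dots> = (\<Sum>s\<in>diffset A A. card (Xsec (sumset A A) s))"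
    using assms by (simp add: finite_diffset finite_sumset Xsec_def)
  finally show ?thesis .
qed

lemma card_le_card_Xsec_sumset:
  assumes "finite A" and "finite B" and "s \<in> diffset B B"
  shows "card A \<le> card (Xsec (sumset A B) s)"
proof -
  obtain p q where "p \<in> B" "q \<in> B" and s: "s = p - q"
    using assms(3) unfolding diffset_def by blast
  then have "(\<lambda>a. a + q) ` A \<subseteq> Xsec (sumset A B) s"
    unfolding Xsec_def sumset_def s
    by (force intro: image_eqI[of _ _ "_ + p"] simp: algebra_simps)
  moreover have "inj_on (\<lambda>a. a + q) A"
    by (rule inj_onI) simp
  moreover have "finite (Xsec (sumset A B) s)"
    using assms(1,2) by (simp add: finite_sumset Xsec_def)
  ultimately show ?thesis
    by (metis card_image card_mono)
qed

lemma pow_mult_sum_le_sum_pow: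
  fixes f :: "'b \<Rightarrow> nat"
  assumes "\<And>i. i \<in> I \<Longrightarrow> m \<le> f i"
  shows "m ^ j * (\<Sum>i\<in>I. f i) \<le> (\<Sum>i\<in>I. f i ^ Suc j)"
  unfolding sum_distrib_left
proof (rule sum_mono)
  fix i assume "i \<in> I"
  then have "m ^ j \<le> f i ^ j"
    using assms by (simp add: power_mono)
  then show "m ^ j * f i \<le> f i ^ Suc j"
    by (simp add: mult.commute)
qed

lemma card_diffset_mult_le_card_tuples_minus_diag:
  assumes "finite A"
  shows "card (diffset A A) * card A ^ k \<le> card (tuples_minus_diag A (k + 1))"
  using card_sumset_mult_le_card_shifted_tuples[of A "uminus ` A"] assms
  by (simp add: diffset_eq_sumset_uminus tuples_minus_diag_eq_shifted_tuples)

lemma max_card_mult_le_card_tuples_plus_diag: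
  assumes "finite A"
  shows "card A ^ Suc k * max (card (diffset A A)) (card (sumset A A))
    \<le> card (tuples_plus_diag A (k + 2))"
proof -
  have "card (diffset A A) * card A ^ Suc k \<le> card (tuples_plus_diag A (k + 2))"
    using card_diffset_mult_le_card_shifted_tuples[OF assms assms, of k]
    by (simp add: tuples_plus_diag_eq_shifted_tuples)
  moreover have "card (sumset A A) * card A ^ Suc k \<le> card (tuples_plus_diag A (k + 2))"
    using card_sumset_mult_le_card_shifted_tuples[OF assms assms, of "Suc k"]
    by (simp add: tuples_plus_diag_eq_shifted_tuples)
  ultimately show ?thesis
    by (simp add: nat_mult_max_right mult.commute)
qed

lemma pow_mult_card_tuples_plus_diag_2_le_Ek:
  assumes "finite A"
  shows "card A ^ k * card (tuples_plus_diag A 2) \<le> Ek (diffset A A) (Suc k) (sumset A A)"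
proof -
  have "card A ^ k * card (tuples_plus_diag A 2)
      \<le> card A ^ k * (\<Sum>s\<in>diffset A A. card (Xsec (sumset A A) s))"
    using card_tuples_plus_diag_2_le_sum_card_Xsec[OF assms] by (rule mult_le_mono2)
  also have "\<dots> \<le> (\<Sum>s\<in>diffset A A. card (Xsec (sumset A A) s) ^ Suc k)"
    using card_le_card_Xsec_sumset[OF assms assms] by (rule pow_mult_sum_le_sum_pow)
  finally show ?thesis
    unfolding Ek_def .
qed

theorem proposition5:
  fixes A :: "'a::ab_group_add set" and k :: nat
  assumes "finite A" and "k \<ge> 1"
  defines "D \<equiv> diffset A A" and "S \<equiv> sumset A A"
  shows "Ek D k D \<ge> card (tuples_minus_diag A (k + 1))
       \<and> card (tuples_minus_diag A (k + 1)) \<ge> card D * card A ^ k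
       \<and> (\<Sum>x\<in>S. ind S x * conv (ind S) (ind D) x ^ k) \<ge> card (tuples_plus_diag A (k + 1))
       \<and> card (tuples_plus_diag A (k + 1)) \<ge> card A ^ k * max (card D) (card S)
       \<and> Ek D k S \<ge> card A ^ (k - 1) * card (tuples_plus_diag A 2)
       \<and> card A ^ (k - 1) * card (tuples_plus_diag A 2) \<ge> card A ^ k * max (card D) (card S)"
proof -
  obtain j where k: "k = Suc j"
    using assms(2) by (cases k) simp_all
  have "card A * max (card D) (card S) \<le> card (tuples_plus_diag A 2)"
    using max_card_mult_le_card_tuples_plus_diag[OF assms(1), of 0]
    unfolding D_def S_def by (simp add: numeral_2_eq_2)
  then have "card A ^ k * max (card D) (card S) \<le> card A ^ j * card (tuples_plus_diag A 2)"
    unfolding k by (simp add: mult.assoc mult_le_mono2)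
  moreover have "card A ^ k * max (card D) (card S) \<le> card (tuples_plus_diag A (k + 1))"
    using max_card_mult_le_card_tuples_plus_diag[OF assms(1), of j]
    unfolding D_def S_def k by simp
  ultimately show ?thesis
    using card_tuples_minus_diag_le_Ek[OF assms(1), of k]
      card_diffset_mult_le_card_tuples_minus_diag[OF assms(1), of k]
      card_tuples_plus_diag_le_sum_conv[OF assms(1), of k]
      pow_mult_card_tuples_plus_diag_2_le_Ek[OF assms(1), of j]
    unfolding D_def S_def k by (intro conjI) simp_all
qed

end
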